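(* Let $\varrho\in C^2(\mathbb{C};\mathbb{C})$ be not $\mathbb{R}$-affine, let $K\subseteq\mathbb{C}$ be compact and $\varepsilon>0$. Then there exist $\mathbb{C}$-affine maps $\phi:\mathbb{C}\to\mathbb{C}^4$ and $\psi:\mathbb{C}^4\to\mathbb{C}$ such that at least one of the three inequalities $$\sup_{z\in K}|(\psi\circ\varrho^{\times4}\circ\phi)(z)-z\overline{z}|<\varepsilon,\quad \sup_{z\in K}|(\psi\circ\varrho^{\times4}\circ\phi)(z)-z^2|<\varepsilon,\quad \sup_{z\in K}|(\psi\circ\varrho^{\times4}\circ\phi)(z)-\overline{z}^2|<\varepsilon$$ holds.
   Context: $\varrho$ is $\mathbb{R}$-affine if it is affine as a map $\mathbb{R}^2\to\mathbb{R}^2$ under $\mathbb{C}\cong\mathbb{R}^2$. A map $\mathbb{C}^a\to\mathbb{C}^b$ is $\mathbb{C}$-affine if it has the form $z\mapsto Az+b$ with complex $A,b$. $\varrho^{\times4}$ applies $\varrho$ componentwise on $\mathbb{C}^4$. $C^2(\mathbb{C};\mathbb{C})$: continuous partial derivatives (real sense) up to order 2. *)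

theory Defs
  imports "HOL-Analysis.Analysis"
begin

text \<open>Directional (real) partial derivative of \<open>f :: complex \<Rightarrow> complex\<close> at \<open>z\<close>
  in direction \<open>v\<close> (we use \<open>v = 1\<close> for \<open>\<partial>/\<partial>x\<close> and \<open>v = \<i>\<close> for \<open>\<partial>/\<partial>y\<close>).\<close>
definition has_partial :: "complex \<Rightarrow> (complex \<Rightarrow> complex) \<Rightarrow> complex \<Rightarrow> bool" where
  "has_partial v f z \<longleftrightarrow> (\<lambda>t::real. f (z + of_real t * v)) differentiable (at 0)"

definition partial :: "complex \<Rightarrow> (complex \<Rightarrow> complex) \<Rightarrow> complex \<Rightarrow> complex" where
  "partial v f z = vector_derivative (\<lambda>t::real. f (z + of_real t * v)) (at 0)"

definition C2 :: "(complex \<Rightarrow> complex) \<Rightarrow> bool" where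
  "C2 f \<longleftrightarrow> continuous_on UNIV f
     \<and> (\<forall>v\<in>{1, \<i>}. (\<forall>z. has_partial v f z) \<and> continuous_on UNIV (partial v f)
         \<and> (\<forall>w\<in>{1, \<i>}. (\<forall>z. has_partial w (partial v f) z)
                        \<and> continuous_on UNIV (partial w (partial v f))))"

text \<open>\<open>\<real>\<close>-affine: affine as a map \<open>\<real>\<^sup>2 \<rightarrow> \<real>\<^sup>2\<close>, i.e. real-linear plus a constant.\<close>
definition R_affine :: "(complex \<Rightarrow> complex) \<Rightarrow> bool" where
  "R_affine f \<longleftrightarrow> (\<exists>A b. linear A \<and> (\<forall>z. f z = A z + b))"

definition C_affine_1_4 :: "(complex \<Rightarrow> complex ^ 4) \<Rightarrow> bool" where
  "C_affine_1_4 \<phi> \<longleftrightarrow> (\<exists>a b :: complex ^ 4. \<forall>z. \<phi> z = (\<chi> i. a $ i * z + b $ i))"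

definition C_affine_4_1 :: "(complex ^ 4 \<Rightarrow> complex) \<Rightarrow> bool" where
  "C_affine_4_1 \<psi> \<longleftrightarrow> (\<exists>(c :: complex ^ 4) (d :: complex). \<forall>w. \<psi> w = (\<Sum>i\<in>UNIV. c $ i * w $ i) + d)"

definition rho4 :: "(complex \<Rightarrow> complex) \<Rightarrow> complex ^ 4 \<Rightarrow> complex ^ 4" where
  "rho4 \<rho> w = (\<chi> i. \<rho> (w $ i))"

text \<open>\<open>sup\<^sub>z\<^sub>\<in>\<^sub>K |g z| < \<epsilon>\<close> (supremum in the extended sense, so empty \<open>K\<close> is fine).\<close>
definition sup_lt :: "complex set \<Rightarrow> (complex \<Rightarrow> complex) \<Rightarrow> real \<Rightarrow> bool" where
  "sup_lt K g \<epsilon> \<longleftrightarrow> (\<exists>\<delta><\<epsilon>. \<forall>z\<in>K. cmod (g z) \<le> \<delta>)"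

end

(* The symmetric second difference
     D_h(w) = (rho (z0 + h w) + rho (z0 - h w) - 2 rho z0) / (2 h^2)
   is a C-affine combination of values of rho at C-affine images of w, and a second-order
   Taylor estimate shows that, as h -> 0, it converges uniformly on bounded sets to the
   Hessian form Q(w) = (rho_xx x^2 + 2 rho_xy x y + rho_yy y^2) / 2 at z0, where w = x + i y.
   As rho is not R-affine, the Hessian does not vanish at some z0. Then
   Q(w) = a w^2 + b w conj(w) + c conj(w)^2 with (a, b, c) nonzero, and a combination
   alpha Q(w) + beta Q(omega w) equals w conj(w) (if b is nonzero, omega = i), w^2 (if b = 0
   and a is nonzero, omega = 1 + i) or conj(w)^2; realizing it by two second differences
   takes four values of rho. *)

theory Submission
  imports Defs
begin

lemma first_order_remainder_bound:
  fixes g g' :: "real \<Rightarrow> 'a::real_normed_vector"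
  assumes deriv: "\<And>t. (g has_vector_derivative g' t) (at t)"
    and near: "\<And>t. \<bar>t\<bar> \<le> \<bar>h\<bar> \<Longrightarrow> norm (g' t - c) \<le> M"
  shows "norm (g h - g 0 - h *\<^sub>R c) \<le> M * \<bar>h\<bar>"
proof -
  define G where "G t = g t - t *\<^sub>R c" for t
  have "norm (G h - G 0) \<le> M * norm (h - 0)"
  proof (rule differentiable_bound[where S="closed_segment 0 h" and f'="\<lambda>t u. u *\<^sub>R (g' t - c)"])
    show "(G has_derivative (\<lambda>u. u *\<^sub>R (g' t - c))) (at t within closed_segment 0 h)" for t
      unfolding G_def using deriv[of t]
      by (auto intro!: derivative_eq_intros simp: has_vector_derivative_def has_derivative_at_withinI
          algebra_simps)
    fix t assume "t \<in> closed_segment 0 h"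
    then have "\<bar>t\<bar> \<le> \<bar>h\<bar>" by (auto simp: closed_segment_eq_real_ivl split: if_splits)
    then show "onorm (\<lambda>u. u *\<^sub>R (g' t - c)) \<le> M"
      using near by (simp add: onorm_scaleR_left onorm_id)
  qed auto
  then show ?thesis by (simp add: G_def algebra_simps)
qed

lemma second_order_remainder_bound:
  fixes g p q :: "real \<Rightarrow> 'a::real_normed_vector"
  assumes deriv: "\<And>t. (g has_vector_derivative p t) (at t)"
    and deriv2: "\<And>t. (p has_vector_derivative q t) (at t)"
    and near: "\<And>t. \<bar>t\<bar> \<le> \<bar>h\<bar> \<Longrightarrow> norm (q t - c) \<le> M"
  shows "norm (g h - g 0 - h *\<^sub>R p 0 - (h\<^sup>2 / 2) *\<^sub>R c) \<le> M * h\<^sup>2"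
proof -
  have "norm (q 0 - c) \<le> M" using near by simp
  then have "0 \<le> M" using norm_ge_zero order_trans by blast
  define G where "G t = g t - t *\<^sub>R p 0 - (t\<^sup>2 / 2) *\<^sub>R c" for t
  have "(G has_vector_derivative (p t - p 0 - t *\<^sub>R c)) (at t)" for t
    unfolding G_def by (rule derivative_eq_intros deriv | simp)+
  then have "norm (G h - G 0 - h *\<^sub>R 0) \<le> (M * \<bar>h\<bar>) * \<bar>h\<bar>"
  proof (rule first_order_remainder_bound)
    fix t :: real assume t: "\<bar>t\<bar> \<le> \<bar>h\<bar>"
    have "norm (p t - p 0 - t *\<^sub>R c) \<le> M * \<bar>t\<bar>"
      using first_order_remainder_bound[OF deriv2, of t c M] near t by auto
    also have "\<dots> \<le> M * \<bar>h\<bar>" using t \<open>0 \<le> M\<close> by (simp add: mult_left_mono)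
    finally show "norm (p t - p 0 - t *\<^sub>R c - 0) \<le> M * \<bar>h\<bar>" by simp
  qed
  then show ?thesis by (simp add: G_def power2_eq_square mult.assoc algebra_simps)
qed

lemma has_vector_derivative_partial_line:
  assumes "\<forall>z. has_partial v f z"
  shows "((\<lambda>t. f (z + of_real t * v)) has_vector_derivative partial v f (z + of_real s * v)) (at s)"
proof -
  let ?k = "\<lambda>t::real. f ((z + of_real s * v) + of_real t * v)"
  have "?k differentiable (at 0)" using assms by (simp add: has_partial_def)
  then have "(?k has_vector_derivative partial v f (z + of_real s * v)) (at 0)"
    unfolding partial_def by (rule vector_derivative_works[THEN iffD1])
  moreover have "((\<lambda>t. t - s) has_vector_derivative 1) (at s)"
    by (auto intro!: derivative_eq_intros)
  ultimately have "((?k \<circ> (\<lambda>t. t - s)) has_vector_derivative partial v f (z + of_real s * v)) (at s)"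
    using vector_diff_chain_at by fastforce
  moreover have "?k \<circ> (\<lambda>t. t - s) = (\<lambda>t. f (z + of_real t * v))"
    by (auto simp: fun_eq_iff algebra_simps)
  ultimately show ?thesis by simp
qed

lemma line_affine_if_partial_constant:
  assumes "\<forall>z. has_partial v f z" and "\<And>t. partial v f (z + of_real t * v) = c"
  shows "f (z + of_real s * v) = f z + of_real s * c"
proof -
  have "norm (f (z + of_real s * v) - f (z + of_real 0 * v) - s *\<^sub>R c) \<le> 0 * \<bar>s\<bar>"
    by (rule first_order_remainder_bound[OF has_vector_derivative_partial_line[OF assms(1)]])
      (simp add: assms(2))
  then show ?thesis by (simp add: scaleR_conv_of_real diff_eq_eq add.commute)
qed

lemma sum_squares_plus_abs_mult_le:
  fixes x y :: real
  shows "x\<^sup>2 + y\<^sup>2 + \<bar>x\<bar> * \<bar>y\<bar> \<le> 2 * (x\<^sup>2 + y\<^sup>2)"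
proof -
  have "2 * (\<bar>x\<bar> * \<bar>y\<bar>) \<le> x\<^sup>2 + y\<^sup>2"
    using sum_squares_bound[of "\<bar>x\<bar>" "\<bar>y\<bar>"] by (simp add: mult.assoc)
  moreover have "0 \<le> \<bar>x\<bar> * \<bar>y\<bar>" by simp
  ultimately show ?thesis by (simp only: mult_2 add_le_cancel_left)
qed

lemma cmod_Complex_Re_le:
  assumes "\<bar>s\<bar> \<le> \<bar>Im w\<bar>"
  shows "cmod (Complex (Re w) s) \<le> cmod w"
proof -
  have "s\<^sup>2 \<le> (Im w)\<^sup>2" using assms by (simp add: abs_le_square_iff)
  then show ?thesis by (simp add: cmod_def)
qed

definition quadratic_form :: "complex \<Rightarrow> complex \<Rightarrow> complex \<Rightarrow> complex \<Rightarrow> complex" where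
  "quadratic_form A B C w =
     of_real ((Re w)\<^sup>2 / 2) * A + of_real (Re w * Im w) * B + of_real ((Im w)\<^sup>2 / 2) * C"

lemma quadratic_form_scale [simp]:
  "quadratic_form A B C (of_real h * w) = of_real (h\<^sup>2) * quadratic_form A B C w"
  by (simp add: quadratic_form_def power_mult_distrib power2_eq_square algebra_simps)

lemma quadratic_form_minus [simp]: "quadratic_form A B C (- w) = quadratic_form A B C w"
  by (simp add: quadratic_form_def)

lemma quadratic_form_conv_cnj:
  "quadratic_form A B C w =
     (A - C - 2 * \<i> * B) / 8 * w\<^sup>2 + (A + C) / 4 * (w * cnj w) + (A - C + 2 * \<i> * B) / 8 * (cnj w)\<^sup>2"
proof -
  define x y where "x = complex_of_real (Re w)" and "y = complex_of_real (Im w)"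
  have w: "w = x + \<i> * y" and cnj_w: "cnj w = x - \<i> * y"
    by (simp_all add: x_def y_def complex_eq_iff)
  have "quadratic_form A B C w = x\<^sup>2 / 2 * A + x * y * B + y\<^sup>2 / 2 * C"
    by (simp add: quadratic_form_def x_def y_def)
  also have "\<dots> = (A - C - 2 * \<i> * B) / 8 * (x + \<i> * y)\<^sup>2 + (A + C) / 4 * ((x + \<i> * y) * (x - \<i> * y))
      + (A - C + 2 * \<i> * B) / 8 * (x - \<i> * y)\<^sup>2"
    by (simp add: field_simps power2_eq_square)
  finally show ?thesis unfolding cnj_w by (simp only: w)
qed

lemma cnj_quadratic_spans_target:
  fixes a b c :: complex
  assumes "a \<noteq> 0 \<or> b \<noteq> 0 \<or> c \<noteq> 0"
  defines "q \<equiv> \<lambda>w. a * w\<^sup>2 + b * (w * cnj w) + c * (cnj w)\<^sup>2"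
  shows "\<exists>T\<in>{\<lambda>z. z * cnj z, \<lambda>z. z\<^sup>2, \<lambda>z. (cnj z)\<^sup>2}. \<exists>\<alpha> \<beta> \<omega>. \<forall>z. T z = \<alpha> * q z + \<beta> * q (\<omega> * z)"
proof -
  consider "b \<noteq> 0" | "b = 0" "a \<noteq> 0" | "b = 0" "a = 0" "c \<noteq> 0" using assms(1) by blast
  then show ?thesis
  proof cases
    case 1
    then have "z * cnj z = 1 / (2 * b) * q z + 1 / (2 * b) * q (\<i> * z)" for z
      by (simp add: q_def field_simps power2_eq_square)
    then have "\<exists>\<alpha> \<beta> \<omega>. \<forall>z. z * cnj z = \<alpha> * q z + \<beta> * q (\<omega> * z)" by blast
    then show ?thesis by simp
  next
    case 2
    then have "z\<^sup>2 = 1 / (2 * a) * q z + - \<i> / (4 * a) * q ((1 + \<i>) * z)" for z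
      by (simp add: q_def field_simps power2_eq_square)
    then have "\<exists>\<alpha> \<beta> \<omega>. \<forall>z. z\<^sup>2 = \<alpha> * q z + \<beta> * q (\<omega> * z)" by blast
    then show ?thesis by simp
  next
    case 3
    then have "(cnj z)\<^sup>2 = 1 / c * q z + 0 * q (1 * z)" for z
      by (simp add: q_def)
    then have "\<exists>\<alpha> \<beta> \<omega>. \<forall>z. (cnj z)\<^sup>2 = \<alpha> * q z + \<beta> * q (\<omega> * z)" by blast
    then show ?thesis by simp
  qed
qed

lemma quadratic_form_spans_target:
  assumes "A \<noteq> 0 \<or> B \<noteq> 0 \<or> C \<noteq> 0"
  shows "\<exists>T\<in>{\<lambda>z. z * cnj z, \<lambda>z. z\<^sup>2, \<lambda>z. (cnj z)\<^sup>2}.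
    \<exists>\<alpha> \<beta> \<omega>. \<forall>z. T z = \<alpha> * quadratic_form A B C z + \<beta> * quadratic_form A B C (\<omega> * z)"
proof -
  have "(A - C - 2 * \<i> * B) / 8 \<noteq> 0 \<or> (A + C) / 4 \<noteq> 0 \<or> (A - C + 2 * \<i> * B) / 8 \<noteq> 0"
    using assms by (auto simp: algebra_simps)
  from cnj_quadratic_spans_target[OF this] show ?thesis
    by (simp only: quadratic_form_conv_cnj)
qed

definition second_difference :: "(complex \<Rightarrow> complex) \<Rightarrow> complex \<Rightarrow> real \<Rightarrow> complex \<Rightarrow> complex" where
  "second_difference f z h w = (f (z + of_real h * w) + f (z - of_real h * w) - 2 * f z) / (2 * of_real (h\<^sup>2))"

lemma second_difference_combination_realizable:
  assumes "h \<noteq> 0"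
  shows "\<exists>\<phi> \<psi>. C_affine_1_4 \<phi> \<and> C_affine_4_1 \<psi> \<and>
     (\<forall>z. (\<psi> \<circ> rho4 f \<circ> \<phi>) z = \<alpha> * second_difference f z0 h z + \<beta> * second_difference f z0 h (\<omega> * z))"
proof -
  define a :: "complex ^ 4" where "a = (\<chi> j. if j = 1 then of_real h else if j = 2 then - of_real h
      else if j = 3 then of_real h * \<omega> else - of_real h * \<omega>)"
  define c :: "complex ^ 4" where
    "c = (\<chi> j. (if j = 1 \<or> j = 2 then \<alpha> else \<beta>) / (2 * of_real (h\<^sup>2)))"
  define \<phi> :: "complex \<Rightarrow> complex ^ 4" where "\<phi> z = (\<chi> j. a $ j * z + z0)" for z
  define \<psi> :: "complex ^ 4 \<Rightarrow> complex" where
    "\<psi> v = (\<Sum>j\<in>UNIV. c $ j * v $ j) + - (\<alpha> + \<beta>) * f z0 / of_real (h\<^sup>2)" for v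
  have "C_affine_1_4 \<phi>" unfolding C_affine_1_4_def \<phi>_def by (intro exI[of _ a] exI[of _ "\<chi> j. z0"]) simp
  moreover have "C_affine_4_1 \<psi>" unfolding C_affine_4_1_def \<psi>_def by blast
  moreover have "(\<psi> \<circ> rho4 f \<circ> \<phi>) z = \<alpha> * second_difference f z0 h z + \<beta> * second_difference f z0 h (\<omega> * z)"
    for z
    using assms by (simp add: \<psi>_def \<phi>_def rho4_def sum_4 a_def c_def second_difference_def field_simps)
  ultimately show ?thesis by blast
qed

context
  fixes f :: "complex \<Rightarrow> complex"
  assumes partial_x: "\<forall>z. has_partial 1 f z" and partial_y: "\<forall>z. has_partial \<i> f z"
    and partial_xx: "\<forall>z. has_partial 1 (partial 1 f) z"
    and partial_xy: "\<forall>z. has_partial 1 (partial \<i> f) z"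
    and partial_yy: "\<forall>z. has_partial \<i> (partial \<i> f) z"
begin

text \<open>Expanding along the horizontal segment from \<open>z0\<close> and then along the vertical one, the
  only mixed partial that occurs is \<open>partial 1 (partial \<i> f)\<close>.\<close>

lemma second_order_taylor_bound:
  assumes near: "\<forall>u\<in>ball z0 \<delta>. cmod (partial 1 (partial 1 f) u - A) \<le> \<eta>
      \<and> cmod (partial 1 (partial \<i> f) u - B) \<le> \<eta> \<and> cmod (partial \<i> (partial \<i> f) u - C) \<le> \<eta>"
    and small: "cmod w < \<delta>"
  shows "cmod (f (z0 + w) - f z0 - of_real (Re w) * partial 1 f z0 - of_real (Im w) * partial \<i> f z0
      - quadratic_form A B C w) \<le> 2 * \<eta> * (cmod w)\<^sup>2"
proof -
  have "cmod (partial 1 (partial 1 f) z0 - A) \<le> \<eta>"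
    using near le_less_trans[OF norm_ge_zero small] by simp
  then have "0 \<le> \<eta>" using norm_ge_zero order_trans by blast
  define x y where "x = Re w" and "y = Im w"
  define p where "p = z0 + of_real x"
  have near_horizontal: "z0 + of_real s * 1 \<in> ball z0 \<delta>" if "\<bar>s\<bar> \<le> \<bar>x\<bar>" for s
    using that abs_Re_le_cmod[of w] small by (simp add: dist_norm x_def)
  have near_vertical: "p + of_real s * \<i> \<in> ball z0 \<delta>" if "\<bar>s\<bar> \<le> \<bar>y\<bar>" for s
  proof -
    have "dist z0 (p + of_real s * \<i>) = cmod (Complex (Re w) s)"
      by (simp add: p_def x_def dist_norm norm_minus_commute Complex_eq algebra_simps)
    then show ?thesis using cmod_Complex_Re_le[of s w] that small by (simp add: y_def)
  qed
  have vertical: "cmod (f (p + of_real y * \<i>) - f p - of_real y * partial \<i> f p - of_real (y\<^sup>2 / 2) * C)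
      \<le> \<eta> * y\<^sup>2"
    using second_order_remainder_bound[OF has_vector_derivative_partial_line[OF partial_y, of p]
        has_vector_derivative_partial_line[OF partial_yy, of p], where h=y and c=C and M=\<eta>]
      near near_vertical by (simp add: scaleR_conv_of_real)
  have mixed: "cmod (partial \<i> f p - partial \<i> f z0 - of_real x * B) \<le> \<eta> * \<bar>x\<bar>"
    using first_order_remainder_bound[OF has_vector_derivative_partial_line[OF partial_xy, of z0],
        where h=x and c=B and M=\<eta>]
      near near_horizontal by (simp add: scaleR_conv_of_real p_def)
  have horizontal: "cmod (f p - f z0 - of_real x * partial 1 f z0 - of_real (x\<^sup>2 / 2) * A) \<le> \<eta> * x\<^sup>2"
    using second_order_remainder_bound[OF has_vector_derivative_partial_line[OF partial_x, of z0]
        has_vector_derivative_partial_line[OF partial_xx, of z0], where h=x and c=A and M=\<eta>]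
      near near_horizontal by (simp add: scaleR_conv_of_real p_def)
  have "z0 + w = p + of_real y * \<i>" by (simp add: p_def x_def y_def complex_eq_iff)
  then have "f (z0 + w) - f z0 - of_real x * partial 1 f z0 - of_real y * partial \<i> f z0
      - quadratic_form A B C w
      = (f (p + of_real y * \<i>) - f p - of_real y * partial \<i> f p - of_real (y\<^sup>2 / 2) * C)
      + (f p - f z0 - of_real x * partial 1 f z0 - of_real (x\<^sup>2 / 2) * A)
      + of_real y * (partial \<i> f p - partial \<i> f z0 - of_real x * B)"
    by (simp add: quadratic_form_def x_def y_def power2_eq_square algebra_simps)
  also have "cmod \<dots> \<le> \<eta> * y\<^sup>2 + \<eta> * x\<^sup>2 + \<bar>y\<bar> * (\<eta> * \<bar>x\<bar>)"
    using vertical horizontal mixed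
    by (intro norm_triangle_le add_mono) (auto simp: norm_mult intro: mult_left_mono)
  also have "\<dots> = \<eta> * (x\<^sup>2 + y\<^sup>2 + \<bar>x\<bar> * \<bar>y\<bar>)" by (simp add: algebra_simps)
  also have "\<dots> \<le> \<eta> * (2 * (x\<^sup>2 + y\<^sup>2))"
    using sum_squares_plus_abs_mult_le \<open>0 \<le> \<eta>\<close> by (rule mult_left_mono)
  also have "\<dots> = 2 * \<eta> * (cmod w)\<^sup>2" by (simp add: cmod_power2 x_def y_def)
  finally show ?thesis by (simp add: x_def y_def)
qed

lemma second_difference_bound:
  assumes near: "\<forall>u\<in>ball z0 \<delta>. cmod (partial 1 (partial 1 f) u - A) \<le> \<eta>
      \<and> cmod (partial 1 (partial \<i> f) u - B) \<le> \<eta> \<and> cmod (partial \<i> (partial \<i> f) u - C) \<le> \<eta>"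
    and "h \<noteq> 0" and small: "\<bar>h\<bar> * cmod w < \<delta>"
  shows "cmod (second_difference f z0 h w - quadratic_form A B C w) \<le> 2 * \<eta> * (cmod w)\<^sup>2"
proof -
  define v where "v = of_real h * w"
  define L where "L = of_real (Re v) * partial 1 f z0 + of_real (Im v) * partial \<i> f z0"
  define e_plus where "e_plus = f (z0 + v) - f z0 - L - quadratic_form A B C v"
  define e_minus where "e_minus = f (z0 + - v) - f z0 + L - quadratic_form A B C v"
  have "cmod v < \<delta>" using small by (simp add: v_def norm_mult)
  then have "cmod e_plus \<le> 2 * \<eta> * (cmod v)\<^sup>2" and "cmod e_minus \<le> 2 * \<eta> * (cmod v)\<^sup>2"
    using second_order_taylor_bound[OF near, where w=v] second_order_taylor_bound[OF near, where w="- v"]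
    by (simp_all add: e_plus_def e_minus_def L_def algebra_simps)
  then have err: "cmod (e_plus + e_minus) \<le> 4 * \<eta> * h\<^sup>2 * (cmod w)\<^sup>2"
    by (intro norm_triangle_le) (simp add: v_def norm_mult power_mult_distrib)
  have "quadratic_form A B C v = of_real (h\<^sup>2) * quadratic_form A B C w"
    by (simp add: v_def)
  then have "second_difference f z0 h w - quadratic_form A B C w = (e_plus + e_minus) / (2 * of_real (h\<^sup>2))"
    using \<open>h \<noteq> 0\<close> unfolding second_difference_def e_plus_def e_minus_def v_def[symmetric]
    by (simp add: field_simps)
  then have "cmod (second_difference f z0 h w - quadratic_form A B C w) = cmod (e_plus + e_minus) / (2 * h\<^sup>2)"
    by (simp add: norm_divide norm_power)
  also have "\<dots> \<le> 4 * \<eta> * h\<^sup>2 * (cmod w)\<^sup>2 / (2 * h\<^sup>2)"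
    by (rule divide_right_mono[OF err]) simp
  also have "\<dots> = 2 * \<eta> * (cmod w)\<^sup>2" using \<open>h \<noteq> 0\<close> by simp
  finally show ?thesis .
qed

lemma second_difference_uniform_approx:
  assumes cont: "isCont (partial 1 (partial 1 f)) z0" "isCont (partial 1 (partial \<i> f)) z0"
      "isCont (partial \<i> (partial \<i> f)) z0"
    and "\<epsilon> > 0"
  shows "\<exists>h. h \<noteq> 0 \<and> (\<forall>w. cmod w \<le> R \<longrightarrow> cmod (second_difference f z0 h w
      - quadratic_form (partial 1 (partial 1 f) z0) (partial 1 (partial \<i> f) z0)
          (partial \<i> (partial \<i> f) z0) w) \<le> \<epsilon>)"
proof -
  define \<eta> where "\<eta> = \<epsilon> / 2 / (R\<^sup>2 + 1)"
  have "R\<^sup>2 + 1 > 0" by (simp add: add_nonneg_pos)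
  then have "\<eta> > 0" using \<open>\<epsilon> > 0\<close> by (simp add: \<eta>_def)
  have "\<forall>\<^sub>F u in nhds z0. dist (g u) (g z0) < \<eta>" if "isCont g z0" for g :: "complex \<Rightarrow> complex"
    using that \<open>\<eta> > 0\<close> unfolding isCont_def tendsto_at_iff_tendsto_nhds by (rule tendstoD)
  then have "\<forall>\<^sub>F u in nhds z0. dist (partial 1 (partial 1 f) u) (partial 1 (partial 1 f) z0) < \<eta>
      \<and> dist (partial 1 (partial \<i> f) u) (partial 1 (partial \<i> f) z0) < \<eta>
      \<and> dist (partial \<i> (partial \<i> f) u) (partial \<i> (partial \<i> f) z0) < \<eta>"
    using cont by (intro eventually_conj) auto
  then obtain \<delta> where "\<delta> > 0" and close: "\<forall>u\<in>ball z0 \<delta>.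
      dist (partial 1 (partial 1 f) u) (partial 1 (partial 1 f) z0) < \<eta>
      \<and> dist (partial 1 (partial \<i> f) u) (partial 1 (partial \<i> f) z0) < \<eta>
      \<and> dist (partial \<i> (partial \<i> f) u) (partial \<i> (partial \<i> f) z0) < \<eta>"
    by (auto simp: eventually_nhds_metric dist_commute)
  then have near: "\<forall>u\<in>ball z0 \<delta>.
      cmod (partial 1 (partial 1 f) u - partial 1 (partial 1 f) z0) \<le> \<eta>
      \<and> cmod (partial 1 (partial \<i> f) u - partial 1 (partial \<i> f) z0) \<le> \<eta>
      \<and> cmod (partial \<i> (partial \<i> f) u - partial \<i> (partial \<i> f) z0) \<le> \<eta>"
    by (simp add: dist_norm order.strict_implies_order)
  define h where "h = \<delta> / (\<bar>R\<bar> + 1)"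
  have "h > 0" using \<open>\<delta> > 0\<close> by (simp add: h_def add_nonneg_pos)
  have "cmod (second_difference f z0 h w - quadratic_form (partial 1 (partial 1 f) z0)
      (partial 1 (partial \<i> f) z0) (partial \<i> (partial \<i> f) z0) w) \<le> \<epsilon>" if "cmod w \<le> R" for w
  proof -
    have "\<bar>h\<bar> * cmod w \<le> h * \<bar>R\<bar>" using that \<open>h > 0\<close> by (simp add: mult_left_mono)
    also have "\<dots> < \<delta>" using \<open>\<delta> > 0\<close> by (simp add: h_def field_simps)
    finally have "cmod (second_difference f z0 h w - quadratic_form (partial 1 (partial 1 f) z0)
        (partial 1 (partial \<i> f) z0) (partial \<i> (partial \<i> f) z0) w) \<le> 2 * \<eta> * (cmod w)\<^sup>2"
      using \<open>h > 0\<close> by (intro second_difference_bound[OF near]) auto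
    also have "\<dots> \<le> 2 * \<eta> * R\<^sup>2"
      using that \<open>\<eta> > 0\<close> by (intro mult_left_mono power_mono) auto
    also have "\<dots> \<le> 2 * \<eta> * (R\<^sup>2 + 1)" using \<open>\<eta> > 0\<close> by simp
    also have "\<dots> = \<epsilon>" using \<open>R\<^sup>2 + 1 > 0\<close> by (simp add: \<eta>_def field_simps)
    finally show ?thesis .
  qed
  then show ?thesis using \<open>h > 0\<close> by (intro exI[of _ h]) auto
qed

lemma quadratic_combination_approximable:
  assumes cont: "isCont (partial 1 (partial 1 f)) z0" "isCont (partial 1 (partial \<i> f)) z0"
      "isCont (partial \<i> (partial \<i> f)) z0"
    and "compact K" and "\<epsilon> > 0"
  defines "Q \<equiv> quadratic_form (partial 1 (partial 1 f) z0) (partial 1 (partial \<i> f) z0)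
      (partial \<i> (partial \<i> f) z0)"
  shows "\<exists>\<phi> \<psi>. C_affine_1_4 \<phi> \<and> C_affine_4_1 \<psi> \<and>
    sup_lt K (\<lambda>z. (\<psi> \<circ> rho4 f \<circ> \<phi>) z - (\<alpha> * Q z + \<beta> * Q (\<omega> * z))) \<epsilon>"
proof -
  obtain R where R: "\<forall>z\<in>K. cmod z \<le> R"
    using compact_imp_bounded[OF \<open>compact K\<close>] unfolding bounded_iff by blast
  define N where "N = \<bar>R\<bar> * (1 + cmod \<omega>)"
  have N: "cmod z \<le> N" "cmod (\<omega> * z) \<le> N" if "z \<in> K" for z
  proof -
    have z: "cmod z \<le> \<bar>R\<bar>" using R that by fastforce
    have "\<bar>R\<bar> \<le> N" and "cmod \<omega> * \<bar>R\<bar> \<le> N" by (simp_all add: N_def algebra_simps)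
    moreover have "cmod (\<omega> * z) \<le> cmod \<omega> * \<bar>R\<bar>" using z by (simp add: norm_mult mult_left_mono)
    ultimately show "cmod z \<le> N" "cmod (\<omega> * z) \<le> N" using z by linarith+
  qed
  define M where "M = cmod \<alpha> + cmod \<beta>"
  define \<eta> where "\<eta> = \<epsilon> / 2 / (M + 1)"
  have "M + 1 > 0" by (simp add: M_def add_nonneg_pos)
  then have "\<eta> > 0" using \<open>\<epsilon> > 0\<close> by (simp add: \<eta>_def)
  obtain h where "h \<noteq> 0" and approx: "\<forall>w. cmod w \<le> N \<longrightarrow> cmod (second_difference f z0 h w - Q w) \<le> \<eta>"
    using second_difference_uniform_approx[OF cont \<open>\<eta> > 0\<close>, of N] unfolding Q_def by blast
  obtain \<phi> \<psi> where "C_affine_1_4 \<phi>" "C_affine_4_1 \<psi>" and realize: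
    "\<forall>z. (\<psi> \<circ> rho4 f \<circ> \<phi>) z = \<alpha> * second_difference f z0 h z + \<beta> * second_difference f z0 h (\<omega> * z)"
    using second_difference_combination_realizable[OF \<open>h \<noteq> 0\<close>] by blast
  have "cmod ((\<psi> \<circ> rho4 f \<circ> \<phi>) z - (\<alpha> * Q z + \<beta> * Q (\<omega> * z))) \<le> \<epsilon> / 2" if "z \<in> K" for z
  proof -
    have "(\<psi> \<circ> rho4 f \<circ> \<phi>) z - (\<alpha> * Q z + \<beta> * Q (\<omega> * z))
        = \<alpha> * (second_difference f z0 h z - Q z) + \<beta> * (second_difference f z0 h (\<omega> * z) - Q (\<omega> * z))"
      using realize by (simp add: algebra_simps)
    also have "cmod \<dots> \<le> cmod \<alpha> * \<eta> + cmod \<beta> * \<eta>"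
      using approx N[OF that] by (intro norm_triangle_le add_mono) (auto simp: norm_mult intro: mult_left_mono)
    also have "\<dots> \<le> (M + 1) * \<eta>" using \<open>\<eta> > 0\<close> by (simp add: M_def algebra_simps)
    also have "\<dots> = \<epsilon> / 2" using \<open>M + 1 > 0\<close> by (simp add: \<eta>_def field_simps)
    finally show ?thesis .
  qed
  then have "sup_lt K (\<lambda>z. (\<psi> \<circ> rho4 f \<circ> \<phi>) z - (\<alpha> * Q z + \<beta> * Q (\<omega> * z))) \<epsilon>"
    unfolding sup_lt_def using \<open>\<epsilon> > 0\<close> by (intro exI[of _ "\<epsilon> / 2"]) auto
  with \<open>C_affine_1_4 \<phi>\<close> \<open>C_affine_4_1 \<psi>\<close> show ?thesis by blast
qed

lemma R_affine_if_second_partials_vanish: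
  assumes "\<And>z. partial 1 (partial 1 f) z = 0" and "\<And>z. partial 1 (partial \<i> f) z = 0"
    and "\<And>z. partial \<i> (partial \<i> f) z = 0"
  shows "R_affine f"
proof -
  have fx_horizontal: "partial 1 f (u + of_real s * 1) = partial 1 f u" for u s
    using line_affine_if_partial_constant[OF partial_xx, where z=u and c=0] assms(1) by simp
  have fy_horizontal: "partial \<i> f (u + of_real s * 1) = partial \<i> f u" for u s
    using line_affine_if_partial_constant[OF partial_xy, where z=u and c=0] assms(2) by simp
  have fy_vertical: "partial \<i> f (u + of_real s * \<i>) = partial \<i> f u" for u s
    using line_affine_if_partial_constant[OF partial_yy, where z=u and c=0] assms(3) by simp
  have u_parts: "u = of_real (Re u) + of_real (Im u) * \<i>" for u
    by (simp add: complex_eq_iff)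
  have fy_constant: "partial \<i> f u = partial \<i> f 0" for u
    using fy_vertical[of "of_real (Re u)" "Im u"] fy_horizontal[of 0 "Re u"] u_parts[of u] by simp
  have real_axis: "f (of_real x) = f 0 + of_real x * partial 1 f 0" for x
    using line_affine_if_partial_constant[OF partial_x, where z=0 and s=x] fx_horizontal[of 0] by simp
  have "f u = (of_real (Re u) * partial 1 f 0 + of_real (Im u) * partial \<i> f 0) + f 0" for u
    using line_affine_if_partial_constant[OF partial_y, where z="of_real (Re u)" and s="Im u"
        and c="partial \<i> f 0"] fy_constant real_axis u_parts[of u] by (simp add: algebra_simps)
  moreover have "linear (\<lambda>u. of_real (Re u) * partial 1 f 0 + of_real (Im u) * partial \<i> f 0)"
    by (rule linearI) (simp_all add: algebra_simps scaleR_conv_of_real)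
  ultimately show ?thesis unfolding R_affine_def by blast
qed

end

theorem proposition3p2:
  fixes \<rho> :: "complex \<Rightarrow> complex" and K :: "complex set" and \<epsilon> :: real
  assumes "C2 \<rho>" and "\<not> R_affine \<rho>" and "compact K" and "\<epsilon> > 0"
  shows "\<exists>(\<phi> :: complex \<Rightarrow> complex ^ 4) (\<psi> :: complex ^ 4 \<Rightarrow> complex).
           C_affine_1_4 \<phi> \<and> C_affine_4_1 \<psi> \<and>
           (sup_lt K (\<lambda>z. (\<psi> \<circ> rho4 \<rho> \<circ> \<phi>) z - z * cnj z) \<epsilon>
          \<or> sup_lt K (\<lambda>z. (\<psi> \<circ> rho4 \<rho> \<circ> \<phi>) z - z ^ 2) \<epsilon>
          \<or> sup_lt K (\<lambda>z. (\<psi> \<circ> rho4 \<rho> \<circ> \<phi>) z - (cnj z) ^ 2) \<epsilon>)"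
proof -
  have partials: "\<forall>z. has_partial 1 \<rho> z" "\<forall>z. has_partial \<i> \<rho> z"
      "\<forall>z. has_partial 1 (partial 1 \<rho>) z" "\<forall>z. has_partial 1 (partial \<i> \<rho>) z"
      "\<forall>z. has_partial \<i> (partial \<i> \<rho>) z"
    and cont: "isCont (partial 1 (partial 1 \<rho>)) z" "isCont (partial 1 (partial \<i> \<rho>)) z"
      "isCont (partial \<i> (partial \<i> \<rho>)) z" for z
    using \<open>C2 \<rho>\<close> by (auto simp: C2_def continuous_on_eq_continuous_at)
  obtain z0 where hessian_nonzero: "partial 1 (partial 1 \<rho>) z0 \<noteq> 0 \<or> partial 1 (partial \<i> \<rho>) z0 \<noteq> 0
      \<or> partial \<i> (partial \<i> \<rho>) z0 \<noteq> 0"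
    using R_affine_if_second_partials_vanish[OF partials] \<open>\<not> R_affine \<rho>\<close> by blast
  define Q where "Q = quadratic_form (partial 1 (partial 1 \<rho>) z0) (partial 1 (partial \<i> \<rho>) z0)
    (partial \<i> (partial \<i> \<rho>) z0)"
  from quadratic_form_spans_target[OF hessian_nonzero] obtain T \<alpha> \<beta> \<omega>
    where T: "T \<in> {\<lambda>z. z * cnj z, \<lambda>z. z\<^sup>2, \<lambda>z. (cnj z)\<^sup>2}" and T_eq: "\<forall>z. T z = \<alpha> * Q z + \<beta> * Q (\<omega> * z)"
    unfolding Q_def by blast
  obtain \<phi> \<psi> where "C_affine_1_4 \<phi>" "C_affine_4_1 \<psi>" "sup_lt K (\<lambda>z. (\<psi> \<circ> rho4 \<rho> \<circ> \<phi>) z - T z) \<epsilon>"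
    using quadratic_combination_approximable[OF partials cont[of z0] \<open>compact K\<close> \<open>\<epsilon> > 0\<close>,
        where \<alpha>=\<alpha> and \<beta>=\<beta> and \<omega>=\<omega>]
    unfolding Q_def[symmetric] T_eq[rule_format, symmetric] by blast
  with T show ?thesis by auto
qed

end
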